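(* Let $X$ be a contractible finite $T_0$-space with more than one point. Then $|X|-\mathrm{rank}(X_M)=1$.
   Context: A finite $T_0$-space is identified with a finite poset via $x\le y$ iff $U_x\subseteq U_y$, where $U_x$ is the minimal open set containing $x$. For a labelling $X=\{x_1,\dots,x_n\}$, $X_M=(x_{i,j})$ is the $n\times n$ matrix with $x_{i,j}=0$ if $x_i\le x_j$ and $x_{i,j}=1$ otherwise. *)

theory Defs
  imports "HOL-Analysis.Analysis" "Jordan_Normal_Form.DL_Rank"
begin

definition minimal_open :: "'a topology \<Rightarrow> 'a \<Rightarrow> 'a set" where
  "minimal_open X a = \<Inter>{U. openin X U \<and> a \<in> U}"

definition fin_space_le :: "'a topology \<Rightarrow> 'a \<Rightarrow> 'a \<Rightarrow> bool" where
  "fin_space_le X a b \<longleftrightarrow> minimal_open X a \<subseteq> minimal_open X b"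

text \<open>The matrix X_M for the labelling x_0,...,x_(n-1) (indices shifted to start at 0):
  entry (i,j) is 0 if x_i \<le> x_j and 1 otherwise.\<close>
definition space_matrix :: "'a topology \<Rightarrow> (nat \<Rightarrow> 'a) \<Rightarrow> real mat" where
  "space_matrix X x = mat (card (topspace X)) (card (topspace X))
     (\<lambda>(i, j). if fin_space_le X (x i) (x j) then 0 else 1)"

end

theory Submission
  imports Defs
begin

(* A finite T0-space is a finite poset, and a homotopy between maps of finite spaces is, by
   continuity in the time variable and connectedness of [0,1], a finite fence of pointwise
   comparable order-preserving maps.  If x is a beat point (the elements strictly below x have a
   maximum y, or dually above), then x |-> y is an order-preserving retraction, so removing x
   preserves contractibility, and a contractible finite poset without beat points is a point.
   Removing a beat point does not change the dimension of the kernel of X_M either, since column x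
   (resp. row x) of X_M is column (resp. row) y minus the unit vector at x.  For a point X_M = (0),
   so by induction the kernel of X_M is a line and rank X_M = |X| - 1. *)

section \<open>Finite posets and beat points\<close>

definition poset_on :: "'a set \<Rightarrow> ('a \<Rightarrow> 'a \<Rightarrow> bool) \<Rightarrow> bool" where
  "poset_on S leq \<longleftrightarrow> reflp_on S leq \<and> antisymp_on S leq \<and> transp_on S leq"

lemma
  assumes "poset_on S leq"
  shows poset_on_refl: "a \<in> S \<Longrightarrow> leq a a"
    and poset_on_antisym: "\<lbrakk>a \<in> S; b \<in> S; leq a b; leq b a\<rbrakk> \<Longrightarrow> a = b"
    and poset_on_trans: "\<lbrakk>a \<in> S; b \<in> S; c \<in> S; leq a b; leq b c\<rbrakk> \<Longrightarrow> leq a c"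
  using assms unfolding poset_on_def reflp_on_def antisymp_on_def transp_on_def by blast+

lemma poset_on_subset: "poset_on S leq \<Longrightarrow> T \<subseteq> S \<Longrightarrow> poset_on T leq"
  unfolding poset_on_def reflp_on_def antisymp_on_def transp_on_def by blast

lemma poset_on_conversep [simp]: "poset_on S leq\<inverse>\<inverse> = poset_on S leq"
  unfolding poset_on_def reflp_on_def by simp

definition order_endomap :: "'a set \<Rightarrow> ('a \<Rightarrow> 'a \<Rightarrow> bool) \<Rightarrow> ('a \<Rightarrow> 'a) \<Rightarrow> bool" where
  "order_endomap S leq f \<longleftrightarrow> f ` S \<subseteq> S \<and> monotone_on S leq leq f"

lemma order_endomap_conversep [simp]: "order_endomap S leq\<inverse>\<inverse> f = order_endomap S leq f"
  unfolding order_endomap_def monotone_on_def by auto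

definition comparable_endomaps :: "'a set \<Rightarrow> ('a \<Rightarrow> 'a \<Rightarrow> bool) \<Rightarrow> (('a \<Rightarrow> 'a) \<times> ('a \<Rightarrow> 'a)) set"
  where "comparable_endomaps S leq = {(f, g). order_endomap S leq f \<and> order_endomap S leq g \<and>
      ((\<forall>a\<in>S. leq (f a) (g a)) \<or> (\<forall>a\<in>S. leq (g a) (f a)))}"

lemma comparable_endomaps_conversep [simp]:
  "comparable_endomaps S leq\<inverse>\<inverse> = comparable_endomaps S leq"
  unfolding comparable_endomaps_def by auto

definition poset_contractible :: "'a set \<Rightarrow> ('a \<Rightarrow> 'a \<Rightarrow> bool) \<Rightarrow> bool" where
  "poset_contractible S leq \<longleftrightarrow> (\<exists>c\<in>S. (id, \<lambda>_. c) \<in> (comparable_endomaps S leq)\<^sup>*)"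

lemma poset_contractible_conversep [simp]: "poset_contractible S leq\<inverse>\<inverse> = poset_contractible S leq"
  unfolding poset_contractible_def by simp

definition down_beat :: "'a set \<Rightarrow> ('a \<Rightarrow> 'a \<Rightarrow> bool) \<Rightarrow> 'a \<Rightarrow> 'a \<Rightarrow> bool" where
  "down_beat S leq x y \<longleftrightarrow> x \<in> S \<and> y \<in> S \<and> y \<noteq> x \<and> leq y x \<and> (\<forall>z\<in>S. leq z x \<longrightarrow> z \<noteq> x \<longrightarrow> leq z y)"

abbreviation up_beat :: "'a set \<Rightarrow> ('a \<Rightarrow> 'a \<Rightarrow> bool) \<Rightarrow> 'a \<Rightarrow> 'a \<Rightarrow> bool" where
  "up_beat S leq \<equiv> down_beat S leq\<inverse>\<inverse>"

lemma beat_free_below_id: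
  assumes po: "poset_on S leq" and fin: "finite S" and no_beat: "\<nexists>x y. down_beat S leq x y"
    and g: "order_endomap S leq g" and below: "\<forall>a\<in>S. leq (g a) a"
  shows "\<forall>a\<in>S. g a = a"
proof -
  have "g a = a" if "a \<in> S" for a
    using that
  proof (induction "card {z\<in>S. leq z a}" arbitrary: a rule: less_induct)
    case less
    show ?case
    proof (rule ccontr)
      assume moved: "g a \<noteq> a"
      have "leq z (g a)" if z: "z \<in> S" "leq z a" "z \<noteq> a" for z
      proof -
        have "{w\<in>S. leq w z} \<subseteq> {w\<in>S. leq w a}"
          using z less.prems poset_on_trans[OF po] by blast
        moreover have "a \<in> {w\<in>S. leq w a} - {w\<in>S. leq w z}"
          using z less.prems poset_on_refl[OF po] poset_on_antisym[OF po] by blast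
        ultimately have "{w\<in>S. leq w z} \<subset> {w\<in>S. leq w a}"
          by blast
        then have "g z = z"
          using less.hyps z(1) fin by (simp add: psubset_card_mono)
        then show ?thesis
          using g z less.prems unfolding order_endomap_def monotone_on_def by metis
      qed
      then have "down_beat S leq a (g a)"
        using moved g below less.prems unfolding down_beat_def order_endomap_def by blast
      then show False
        using no_beat by blast
    qed
  qed
  then show ?thesis by blast
qed

lemma beat_free_comparable_id:
  assumes po: "poset_on S leq" and fin: "finite S"
    and no_down: "\<nexists>x y. down_beat S leq x y" and no_up: "\<nexists>x y. up_beat S leq x y"
    and fg: "(f, g) \<in> comparable_endomaps S leq" and f: "\<forall>a\<in>S. f a = a"
  shows "\<forall>a\<in>S. g a = a"
proof -
  have g: "order_endomap S leq g"
    and "(\<forall>a\<in>S. leq (f a) (g a)) \<or> (\<forall>a\<in>S. leq (g a) (f a))"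
    using fg unfolding comparable_endomaps_def by blast+
  then consider "\<forall>a\<in>S. leq (g a) a" | "\<forall>a\<in>S. leq\<inverse>\<inverse> (g a) a"
    using f by force
  then show ?thesis
  proof cases
    case 1
    then show ?thesis
      using beat_free_below_id[OF po fin no_down g] by blast
  next
    case 2
    moreover have "poset_on S leq\<inverse>\<inverse>" "order_endomap S leq\<inverse>\<inverse> g"
      using po g by simp_all
    ultimately show ?thesis
      using beat_free_below_id[of S "leq\<inverse>\<inverse>"] fin no_up by blast
  qed
qed

lemma beat_free_contractible_singleton:
  assumes po: "poset_on S leq" and fin: "finite S"
    and no_down: "\<nexists>x y. down_beat S leq x y" and no_up: "\<nexists>x y. up_beat S leq x y"
    and contr: "poset_contractible S leq"
  shows "\<exists>c. S = {c}"
proof -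
  obtain c where c: "c \<in> S" and path: "(id, \<lambda>_. c) \<in> (comparable_endomaps S leq)\<^sup>*"
    using contr unfolding poset_contractible_def by blast
  have "\<forall>a\<in>S. h a = a" if "(id, h) \<in> (comparable_endomaps S leq)\<^sup>*" for h
    using that
  proof (induction rule: rtrancl_induct)
    case base
    then show ?case by simp
  next
    case (step g h)
    then show ?case
      using beat_free_comparable_id[OF po fin no_down no_up step.hyps(2) step.IH] by blast
  qed
  from this[OF path] have "S \<subseteq> {c}"
    by auto
  then show ?thesis
    using c by blast
qed

lemma poset_contractible_retract:
  assumes contr: "poset_contractible S leq" and T: "T \<subseteq> S" and refl: "reflp_on T leq"
    and r: "r ` S \<subseteq> T" "monotone_on S leq leq r" and retract: "\<forall>a\<in>T. r a = a"
  shows "poset_contractible T leq"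
proof -
  obtain c where c: "c \<in> S" and path: "(id, \<lambda>_. c) \<in> (comparable_endomaps S leq)\<^sup>*"
    using contr unfolding poset_contractible_def by blast
  have r_mono: "leq (r a) (r b)" if "a \<in> S" "b \<in> S" "leq a b" for a b
    using r(2) that unfolding monotone_on_def by blast
  have endo: "order_endomap T leq (r \<circ> f)" if f: "order_endomap S leq f" for f
  proof -
    have "f ` T \<subseteq> S" "monotone_on T leq leq f"
      using f T monotone_on_subset unfolding order_endomap_def by blast+
    then show ?thesis
      using r r_mono unfolding order_endomap_def monotone_on_def by (auto simp: image_subset_iff)
  qed
  have compose: "(r \<circ> f, r \<circ> g) \<in> comparable_endomaps T leq"
    if fg: "(f, g) \<in> comparable_endomaps S leq" for f g
  proof -
    have f: "order_endomap S leq f" and g: "order_endomap S leq g"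
      and cmp: "(\<forall>a\<in>S. leq (f a) (g a)) \<or> (\<forall>a\<in>S. leq (g a) (f a))"
      using fg unfolding comparable_endomaps_def by blast+
    have "f a \<in> S" "g a \<in> S" if "a \<in> T" for a
      using f g T that unfolding order_endomap_def by blast+
    then have "(\<forall>a\<in>T. leq (r (f a)) (r (g a))) \<or> (\<forall>a\<in>T. leq (r (g a)) (r (f a)))"
      using cmp T r_mono by blast
    then show ?thesis
      using endo[OF f] endo[OF g] unfolding comparable_endomaps_def by simp
  qed
  have "(r, r \<circ> h) \<in> (comparable_endomaps T leq)\<^sup>*"
    if "(id, h) \<in> (comparable_endomaps S leq)\<^sup>*" for h
    using that
  proof (induction rule: rtrancl_induct)
    case (step g h)
    show ?case
      by (rule rtrancl_into_rtrancl[OF step.IH compose[OF step.hyps(2)]])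
  qed simp
  from this[OF path] have "(r, \<lambda>_. r c) \<in> (comparable_endomaps T leq)\<^sup>*"
    by (simp add: o_def)
  moreover have "(id, r) \<in> comparable_endomaps T leq"
  proof -
    have "order_endomap T leq (r \<circ> id)"
      by (rule endo) (simp add: order_endomap_def monotone_on_def)
    moreover have "\<forall>a\<in>T. leq (id a) (r a)"
      using refl retract unfolding reflp_on_def by simp
    ultimately show ?thesis
      unfolding comparable_endomaps_def by (simp add: order_endomap_def monotone_on_def)
  qed
  ultimately have "(id, \<lambda>_. r c) \<in> (comparable_endomaps T leq)\<^sup>*"
    by (simp add: converse_rtrancl_into_rtrancl)
  moreover have "r c \<in> T"
    using c r(1) by blast
  ultimately show ?thesis
    unfolding poset_contractible_def by blast
qed

lemma down_beat_retraction:
  assumes po: "poset_on S leq" and beat: "down_beat S leq x y"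
  shows "(\<lambda>a. if a = x then y else a) ` S \<subseteq> S - {x}"
    and "monotone_on S leq leq (\<lambda>a. if a = x then y else a)"
proof -
  have x: "x \<in> S" and y: "y \<in> S" "y \<noteq> x" "leq y x"
    and below_x: "\<And>z. z \<in> S \<Longrightarrow> leq z x \<Longrightarrow> z \<noteq> x \<Longrightarrow> leq z y"
    using beat unfolding down_beat_def by auto
  show "(\<lambda>a. if a = x then y else a) ` S \<subseteq> S - {x}"
    using y by auto
  show "monotone_on S leq leq (\<lambda>a. if a = x then y else a)"
  proof (rule monotone_onI)
    fix a b assume ab: "a \<in> S" "b \<in> S" "leq a b"
    show "leq (if a = x then y else a) (if b = x then y else b)"
    proof (cases "a = x"; cases "b = x")
      assume "a = x" "b \<noteq> x"
      then show ?thesis using poset_on_trans[OF po y(1) x ab(2) y(3)] ab(3) by simp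
    next
      assume "a \<noteq> x" "b = x"
      then show ?thesis using below_x ab by simp
    qed (use poset_on_refl[OF po y(1)] ab in auto)
  qed
qed

lemma poset_contractible_remove_down_beat:
  assumes po: "poset_on S leq" and contr: "poset_contractible S leq" and beat: "down_beat S leq x y"
  shows "poset_contractible (S - {x}) leq"
proof (rule poset_contractible_retract[OF contr _ _ down_beat_retraction[OF po beat]])
  show "reflp_on (S - {x}) leq"
    using po unfolding poset_on_def reflp_on_def by blast
qed auto

section \<open>The kernel of the order matrix\<close>

definition order_entry :: "('a \<Rightarrow> 'a \<Rightarrow> bool) \<Rightarrow> 'a \<Rightarrow> 'a \<Rightarrow> real" where
  "order_entry leq a b = (if leq a b then 0 else 1)"

(* Vectors indexed by S are functions on the ambient type; their values off S are irrelevant. *)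
definition order_kernel :: "'a set \<Rightarrow> ('a \<Rightarrow> 'a \<Rightarrow> bool) \<Rightarrow> ('a \<Rightarrow> real) set" where
  "order_kernel S leq = {v. \<forall>z\<in>S. (\<Sum>b\<in>S. order_entry leq z b * v b) = 0}"

definition one_dimensional_on :: "'a set \<Rightarrow> ('a \<Rightarrow> real) set \<Rightarrow> bool" where
  "one_dimensional_on S K \<longleftrightarrow>
     (\<exists>v0\<in>K. (\<exists>b\<in>S. v0 b \<noteq> 0) \<and> (\<forall>v\<in>K. \<exists>c. \<forall>b\<in>S. v b = c * v0 b))"

lemma order_kernel_cong:
  assumes "\<forall>b\<in>S. v b = w b"
  shows "v \<in> order_kernel S leq \<longleftrightarrow> w \<in> order_kernel S leq"
  using assms unfolding order_kernel_def by simp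

lemma one_dimensional_on_transfer:
  assumes K': "one_dimensional_on S' K'"
    and into: "\<And>v'. v' \<in> K' \<Longrightarrow> E v' \<in> K"
    and onto: "\<And>v. v \<in> K \<Longrightarrow> \<exists>v'\<in>K'. \<forall>a\<in>S. v a = E v' a"
    and nonzero: "\<And>v'. \<exists>b\<in>S'. v' b \<noteq> 0 \<Longrightarrow> \<exists>a\<in>S. E v' a \<noteq> 0"
    and homogeneous: "\<And>v' w' c. \<forall>b\<in>S'. w' b = c * v' b \<Longrightarrow> \<forall>a\<in>S. E w' a = c * E v' a"
  shows "one_dimensional_on S K"
proof -
  obtain v0 where v0: "v0 \<in> K'" "\<exists>b\<in>S'. v0 b \<noteq> 0"
    and span: "\<forall>v'\<in>K'. \<exists>c. \<forall>b\<in>S'. v' b = c * v0 b"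
    using K' unfolding one_dimensional_on_def by blast
  have "\<exists>c. \<forall>a\<in>S. v a = c * E v0 a" if vK: "v \<in> K" for v
  proof -
    obtain v' where "v' \<in> K'" and v: "\<forall>a\<in>S. v a = E v' a"
      using onto[OF vK] by blast
    then obtain c where "\<forall>b\<in>S'. v' b = c * v0 b"
      using span by blast
    then show ?thesis
      using v homogeneous by metis
  qed
  then show ?thesis
    unfolding one_dimensional_on_def using into[OF v0(1)] nonzero[OF v0(2)] by blast
qed

lemma one_dimensional_on_order_kernel_singleton:
  "leq c c \<Longrightarrow> one_dimensional_on {c} (order_kernel {c} leq)"
  unfolding one_dimensional_on_def order_kernel_def order_entry_def
  by (intro bexI[of _ "\<lambda>_. 1"]) auto

lemma up_beat_order_entry:
  assumes po: "poset_on S leq" and beat: "up_beat S leq x y"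
  shows "order_entry leq x x = 0" and "order_entry leq y x = 1"
    and "\<And>b. b \<in> S - {x} \<Longrightarrow> order_entry leq x b = order_entry leq y b"
proof -
  have x: "x \<in> S" and y: "y \<in> S" "y \<noteq> x" "leq x y"
    and above_x: "\<And>z. z \<in> S \<Longrightarrow> leq x z \<Longrightarrow> z \<noteq> x \<Longrightarrow> leq y z"
    using beat unfolding down_beat_def by auto
  show "order_entry leq x x = 0"
    using poset_on_refl[OF po x] unfolding order_entry_def by simp
  show "order_entry leq y x = 1"
    using poset_on_antisym[OF po x y(1) y(3)] y(2) unfolding order_entry_def by auto
  show "order_entry leq x b = order_entry leq y b" if "b \<in> S - {x}" for b
    using that above_x poset_on_trans[OF po x y(1) _ y(3)] unfolding order_entry_def by auto
qed

lemma down_beat_order_entry: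
  assumes po: "poset_on S leq" and beat: "down_beat S leq x y" and z: "z \<in> S"
  shows "order_entry leq z x = order_entry leq z y - (if z = x then 1 else 0)"
proof -
  have x: "x \<in> S" and y: "y \<in> S" "y \<noteq> x" "leq y x"
    and below_x: "\<And>z. z \<in> S \<Longrightarrow> leq z x \<Longrightarrow> z \<noteq> x \<Longrightarrow> leq z y"
    using beat unfolding down_beat_def by auto
  show ?thesis
  proof (cases "z = x")
    case True
    then show ?thesis
      using poset_on_refl[OF po x] poset_on_antisym[OF po x y(1) _ y(3)] y(2)
      unfolding order_entry_def by auto
  next
    case False
    then show ?thesis
      using below_x[OF z] poset_on_trans[OF po z y(1) x _ y(3)] unfolding order_entry_def by auto
  qed
qed

lemma order_kernel_up_beat_iff:
  assumes po: "poset_on S leq" and fin: "finite S" and beat: "up_beat S leq x y"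
  shows "v \<in> order_kernel S leq \<longleftrightarrow> v x = 0 \<and> v \<in> order_kernel (S - {x}) leq"
proof -
  have x: "x \<in> S" and y: "y \<in> S - {x}"
    using beat unfolding down_beat_def by auto
  define row where "row z = (\<Sum>b\<in>S - {x}. order_entry leq z b * v b)" for z
  have split: "(\<Sum>b\<in>S. order_entry leq z b * v b) = order_entry leq z x * v x + row z" for z
    unfolding row_def using fin x by (simp add: sum.remove)
  note entry = up_beat_order_entry[OF po beat]
  have row_x: "row x = row y"
    unfolding row_def using entry(3) by (intro sum.cong) auto
  have "(\<forall>z\<in>S. order_entry leq z x * v x + row z = 0) \<longleftrightarrow> v x = 0 \<and> (\<forall>z\<in>S - {x}. row z = 0)"
  proof
    assume rows: "\<forall>z\<in>S. order_entry leq z x * v x + row z = 0"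
    then have "row y = 0"
      using x row_x entry(1) by force
    then have "v x = 0"
      using rows y entry(2) by force
    then show "v x = 0 \<and> (\<forall>z\<in>S - {x}. row z = 0)"
      using rows by simp
  next
    assume "v x = 0 \<and> (\<forall>z\<in>S - {x}. row z = 0)"
    then show "\<forall>z\<in>S. order_entry leq z x * v x + row z = 0"
      using row_x y by auto
  qed
  then show ?thesis
    unfolding order_kernel_def mem_Collect_eq split by (simp add: row_def)
qed

lemma one_dimensional_order_kernel_up_beat:
  assumes po: "poset_on S leq" and fin: "finite S" and beat: "up_beat S leq x y"
    and K: "one_dimensional_on (S - {x}) (order_kernel (S - {x}) leq)"
  shows "one_dimensional_on S (order_kernel S leq)"
proof (rule one_dimensional_on_transfer[OF K, where E = "\<lambda>v'. v'(x := 0)"])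
  note kernel_iff = order_kernel_up_beat_iff[OF po fin beat]
  show "v'(x := 0) \<in> order_kernel S leq" if "v' \<in> order_kernel (S - {x}) leq" for v'
    using that order_kernel_cong[of "S - {x}" "v'(x := 0)" v'] by (simp add: kernel_iff)
  show "\<exists>v'\<in>order_kernel (S - {x}) leq. \<forall>a\<in>S. v a = (v'(x := 0)) a"
    if "v \<in> order_kernel S leq" for v
    using that by (intro bexI[of _ v]) (auto simp: kernel_iff)
qed auto

lemma order_kernel_down_beat_sum:
  assumes po: "poset_on S leq" and fin: "finite S" and beat: "down_beat S leq x y" and z: "z \<in> S"
  shows "(\<Sum>b\<in>S. order_entry leq z b * v b)
    = (\<Sum>b\<in>S - {x}. order_entry leq z b * (v(y := v y + v x)) b) - (if z = x then v x else 0)"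
proof -
  have x: "x \<in> S" and y: "y \<in> S - {x}"
    using beat unfolding down_beat_def by auto
  have "(\<Sum>b\<in>S - {x}. order_entry leq z b * (v(y := v y + v x)) b)
      = (\<Sum>b\<in>S - {x}. order_entry leq z b * v b) + order_entry leq z y * v x"
    using fin y by (simp add: sum.remove algebra_simps)
  moreover have "(\<Sum>b\<in>S. order_entry leq z b * v b)
      = order_entry leq z x * v x + (\<Sum>b\<in>S - {x}. order_entry leq z b * v b)"
    using fin x by (simp add: sum.remove)
  moreover have "order_entry leq z x * v x = order_entry leq z y * v x - (if z = x then v x else 0)"
    using down_beat_order_entry[OF po beat z] by (simp add: left_diff_distrib)
  ultimately show ?thesis
    by linarith
qed

(* Column x is column y minus the unit vector at x, so adding the x-coordinate to the
   y-coordinate maps the kernel on S onto the kernel on S - {x}; E inverts this, reading the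
   x-coordinate off row x. *)
lemma one_dimensional_order_kernel_down_beat:
  assumes po: "poset_on S leq" and fin: "finite S" and beat: "down_beat S leq x y"
    and K: "one_dimensional_on (S - {x}) (order_kernel (S - {x}) leq)"
  shows "one_dimensional_on S (order_kernel S leq)"
proof -
  let ?S' = "S - {x}"
  have x: "x \<in> S" and y: "y \<in> ?S'"
    using beat unfolding down_beat_def by auto
  define merge where "merge v = v(y := v y + v x)" for v :: "'a \<Rightarrow> real"
  define row_x where "row_x v' = (\<Sum>b\<in>?S'. order_entry leq x b * v' b)" for v'
  define E where "E v' = v'(x := row_x v', y := v' y - row_x v')" for v'
  have merge_E: "\<forall>b\<in>?S'. merge (E v') b = v' b" for v'
    using y unfolding merge_def E_def by auto
  have row_x_cong: "row_x v' = row_x w'" if "\<forall>b\<in>?S'. v' b = w' b" for v' w'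
    unfolding row_x_def using that by (intro sum.cong) auto
  have kernel_iff: "v \<in> order_kernel S leq \<longleftrightarrow> merge v \<in> order_kernel ?S' leq \<and> v x = row_x (merge v)"
    for v
  proof -
    have "v \<in> order_kernel S leq \<longleftrightarrow>
        (\<forall>z\<in>S. (\<Sum>b\<in>?S'. order_entry leq z b * merge v b) - (if z = x then v x else 0) = 0)"
      unfolding order_kernel_def merge_def using order_kernel_down_beat_sum[OF po fin beat] by simp
    also have "\<dots> \<longleftrightarrow> (\<forall>z\<in>?S'. (\<Sum>b\<in>?S'. order_entry leq z b * merge v b) = 0)
        \<and> row_x (merge v) - v x = 0"
      using x unfolding row_x_def by auto
    finally show ?thesis
      unfolding order_kernel_def by auto
  qed
  show ?thesis
  proof (rule one_dimensional_on_transfer[OF K, where E = E])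
    fix v' assume "v' \<in> order_kernel ?S' leq"
    then show "E v' \<in> order_kernel S leq"
      using order_kernel_cong[OF merge_E] row_x_cong[OF merge_E] y unfolding kernel_iff
      by (auto simp: E_def)
  next
    fix v assume "v \<in> order_kernel S leq"
    then have "merge v \<in> order_kernel ?S' leq" and "v x = row_x (merge v)"
      unfolding kernel_iff by auto
    moreover have "\<forall>a\<in>S. v a = E (merge v) a"
      using \<open>v x = row_x (merge v)\<close> y unfolding E_def merge_def by auto
    ultimately show "\<exists>v'\<in>order_kernel ?S' leq. \<forall>a\<in>S. v a = E v' a"
      by blast
  next
    fix v' :: "'a \<Rightarrow> real" assume "\<exists>b\<in>?S'. v' b \<noteq> 0"
    then obtain b where b: "b \<in> ?S'" "merge (E v') b \<noteq> 0"
      using merge_E by metis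
    show "\<exists>a\<in>S. E v' a \<noteq> 0"
    proof (rule ccontr)
      assume "\<not> (\<exists>a\<in>S. E v' a \<noteq> 0)"
      then have "merge (E v') b = 0"
        using b(1) x y unfolding merge_def by auto
      then show False
        using b(2) by contradiction
    qed
  next
    fix v' w' :: "'a \<Rightarrow> real" and c assume w': "\<forall>b\<in>?S'. w' b = c * v' b"
    then have "row_x w' = c * row_x v'"
      unfolding row_x_def by (simp add: sum_distrib_left algebra_simps)
    then show "\<forall>a\<in>S. E w' a = c * E v' a"
      using w' y unfolding E_def by (auto simp: algebra_simps)
  qed
qed

theorem one_dimensional_order_kernel_if_contractible:
  assumes "finite S" and "poset_on S leq" and "poset_contractible S leq" and "S \<noteq> {}"
  shows "one_dimensional_on S (order_kernel S leq)"
  using assms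
proof (induction "card S" arbitrary: S rule: less_induct)
  case less
  note fin = less.prems(1) and po = less.prems(2) and contr = less.prems(3)
  have smaller: "one_dimensional_on (S - {x}) (order_kernel (S - {x}) leq)"
    if beat: "down_beat S leq x y \<or> up_beat S leq x y"
      and contr': "poset_contractible (S - {x}) leq" for x y
  proof (rule less.hyps)
    have "x \<in> S" "y \<in> S - {x}"
      using beat unfolding down_beat_def by auto
    then show "card (S - {x}) < card S" "S - {x} \<noteq> {}"
      using card_Diff1_less[OF fin] by auto
    show "finite (S - {x})" "poset_on (S - {x}) leq"
      using fin poset_on_subset[OF po] by auto
  qed (rule contr')
  consider (down) x y where "down_beat S leq x y" | (up) x y where "up_beat S leq x y"
    | (beat_free) "\<nexists>x y. down_beat S leq x y" "\<nexists>x y. up_beat S leq x y"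
    by blast
  then show ?case
  proof cases
    case down
    have "poset_contractible (S - {x}) leq"
      by (rule poset_contractible_remove_down_beat[OF po contr down])
    from smaller[OF disjI1[OF down] this] show ?thesis
      by (rule one_dimensional_order_kernel_down_beat[OF po fin down])
  next
    case up
    have "poset_contractible (S - {x}) leq"
      using poset_contractible_remove_down_beat[of S "leq\<inverse>\<inverse>"] po contr up by simp
    from smaller[OF disjI2[OF up] this] show ?thesis
      by (rule one_dimensional_order_kernel_up_beat[OF po fin up])
  next
    case beat_free
    obtain c where S: "S = {c}"
      using beat_free_contractible_singleton[OF po fin beat_free contr] by blast
    then have "leq c c"
      using poset_on_refl[OF po] by simp
    then show ?thesis
      unfolding S by (rule one_dimensional_on_order_kernel_singleton)
  qed
qed

section \<open>Rank of a matrix whose kernel is a line\<close>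

lemma mult_mat_vec_eq_zero_iff:
  assumes A: "A \<in> carrier_mat n m" and w: "w \<in> carrier_vec m"
  shows "A *\<^sub>v w = 0\<^sub>v n \<longleftrightarrow> (\<forall>i<n. (\<Sum>j<m. A $$ (i, j) * w $ j) = 0)"
proof -
  have "(A *\<^sub>v w) $ i = (\<Sum>j<m. A $$ (i, j) * w $ j)" if "i < n" for i
    using A w that by (auto simp: scalar_prod_def lessThan_atLeast0 intro!: sum.cong)
  then show ?thesis
    using A by (auto simp: vec_eq_iff)
qed

lemma mult_mat_unit_vec:
  fixes A :: "'a :: semiring_1 mat"
  assumes A: "A \<in> carrier_mat n m" and j: "j < m"
  shows "A *\<^sub>v unit_vec m j = col A j"
  using A j by (intro eq_vecI) auto

lemma (in vec_space) lin_indpt_cols_if_kernel_trivial: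
  assumes A: "A \<in> carrier_mat n m"
    and kernel: "\<And>u. u \<in> carrier_vec m \<Longrightarrow> A *\<^sub>v u = 0\<^sub>v n \<Longrightarrow> u = 0\<^sub>v m"
  shows "distinct (cols A)" and "lin_indpt (set (cols A))"
proof -
  show dist: "distinct (cols A)"
  proof (rule ccontr)
    assume "\<not> distinct (cols A)"
    then obtain i j where ij: "i \<noteq> j" "i < m" "j < m" "col A i = col A j"
      using A by (auto simp: distinct_conv_nth)
    have "A *\<^sub>v (unit_vec m i - unit_vec m j) = 0\<^sub>v n"
      using A ij by (simp add: mult_minus_distrib_mat_vec mult_mat_unit_vec)
    then have "(unit_vec m i - unit_vec m j :: 'a vec) $ i = 0"
      using kernel[of "unit_vec m i - unit_vec m j"] ij by simp
    then show False
      using ij by simp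
  qed
  show "lin_indpt (set (cols A))"
  proof
    assume "lin_dep (set (cols A))"
    then obtain v where "v \<in> carrier_vec m" "v \<noteq> 0\<^sub>v m" "A *\<^sub>v v = 0\<^sub>v n"
      by (rule lin_depE[OF A _ dist])
    then show False
      using kernel by blast
  qed
qed

lemma bij_betw_insert_index: "k < n \<Longrightarrow> bij_betw (insert_index k) {..<n - 1} ({..<n} - {k})"
  by (rule bij_betw_byWitness[where f' = "delete_index k"])
    (auto simp: insert_index_def delete_index_def)

lemma (in vec_space) rank_ge_if_kernel_vanishing_at:
  assumes A: "A \<in> carrier_mat n n" and k: "k < n"
    and kernel: "\<And>w. w \<in> carrier_vec n \<Longrightarrow> A *\<^sub>v w = 0\<^sub>v n \<Longrightarrow> w $ k = 0 \<Longrightarrow> w = 0\<^sub>v n"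
  shows "n - 1 \<le> rank A"
proof -
  define B where "B = mat n (n - 1) (\<lambda>(i, j). A $$ (i, insert_index k j))"
  have B: "B \<in> carrier_mat n (n - 1)"
    unfolding B_def by simp
  have ins: "insert_index k j < n" if "j < n - 1" for j
    using that by (auto simp: insert_index_def)
  have "u = 0\<^sub>v (n - 1)" if u: "u \<in> carrier_vec (n - 1)" and Bu: "B *\<^sub>v u = 0\<^sub>v n" for u
  proof -
    define w where "w = vec n (\<lambda>i. if i = k then 0 else u $ delete_index k i)"
    have w: "w \<in> carrier_vec n" "w $ k = 0"
      unfolding w_def using k by auto
    have w_ins: "w $ insert_index k j = u $ j" if "j < n - 1" for j
      using that ins[OF that] unfolding w_def by (auto simp: insert_index_def delete_index_def)
    have "A *\<^sub>v w = 0\<^sub>v n"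
      unfolding mult_mat_vec_eq_zero_iff[OF A w(1)]
    proof (intro allI impI)
      fix i assume i: "i < n"
      have "(\<Sum>j<n. A $$ (i, j) * w $ j) = (\<Sum>j\<in>{..<n} - {k}. A $$ (i, j) * w $ j)"
        using k w(2) by (simp add: sum.remove)
      also have "\<dots> = (\<Sum>j<n - 1. A $$ (i, insert_index k j) * w $ insert_index k j)"
        using sum.reindex_bij_betw[OF bij_betw_insert_index[OF k], of "\<lambda>j. A $$ (i, j) * w $ j"]
        by simp
      also have "\<dots> = (\<Sum>j<n - 1. B $$ (i, j) * u $ j)"
        using i w_ins by (auto simp: B_def intro!: sum.cong)
      also have "\<dots> = 0"
        using Bu i unfolding mult_mat_vec_eq_zero_iff[OF B u] by blast
      finally show "(\<Sum>j<n. A $$ (i, j) * w $ j) = 0" .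
    qed
    then have "w = 0\<^sub>v n"
      using kernel w by blast
    then show ?thesis
      using u w_ins ins by (auto simp: vec_eq_iff)
  qed
  then have dist: "distinct (cols B)" and indpt: "lin_indpt (set (cols B))"
    using lin_indpt_cols_if_kernel_trivial[OF B] by blast+
  have sub: "set (cols B) \<subseteq> set (cols A)"
  proof
    fix c assume "c \<in> set (cols B)"
    then obtain j where j: "j < n - 1" "c = col B j"
      using B by (auto simp: in_set_conv_nth)
    then have "c = col A (insert_index k j)"
      using A ins[OF j(1)] by (auto simp: B_def)
    then show "c \<in> set (cols A)"
      using A ins[OF j(1)] by (auto simp: in_set_conv_nth)
  qed
  have "card (set (cols B)) = n - 1"
    using dist B by (simp add: distinct_card)
  then show ?thesis
    using rank_ge_card_indpt[OF A sub indpt] by simp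
qed

lemma (in vec_space) rank_eq_if_kernel_line:
  assumes A: "A \<in> carrier_mat n n"
    and v0: "v0 \<in> carrier_vec n" "v0 \<noteq> 0\<^sub>v n" "A *\<^sub>v v0 = 0\<^sub>v n"
    and line: "\<And>w. w \<in> carrier_vec n \<Longrightarrow> A *\<^sub>v w = 0\<^sub>v n \<Longrightarrow> \<exists>c. w = c \<cdot>\<^sub>v v0"
  shows "rank A = n - 1"
proof -
  have "det A = 0"
    using det_0_iff_vec_prod_zero_field[OF A] v0 by blast
  then have "rank A < n"
    by (rule det_zero_low_rank[OF A])
  moreover obtain k where k: "k < n" "v0 $ k \<noteq> 0"
    using v0(1,2) by (auto simp: vec_eq_iff)
  have "w = 0\<^sub>v n" if w: "w \<in> carrier_vec n" "A *\<^sub>v w = 0\<^sub>v n" "w $ k = 0" for w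
  proof -
    obtain c where c: "w = c \<cdot>\<^sub>v v0"
      using line w(1,2) by blast
    then have "c = 0"
      using w(3) k v0(1) by simp
    then show ?thesis
      using c v0(1) by auto
  qed
  then have "n - 1 \<le> rank A"
    by (rule rank_ge_if_kernel_vanishing_at[OF A k(1)])
  ultimately show ?thesis
    by linarith
qed

definition order_matrix :: "('a \<Rightarrow> 'a \<Rightarrow> bool) \<Rightarrow> (nat \<Rightarrow> 'a) \<Rightarrow> nat \<Rightarrow> real mat" where
  "order_matrix leq x n = mat n n (\<lambda>(i, j). order_entry leq (x i) (x j))"

lemma order_matrix_kernel_iff:
  assumes bij: "bij_betw x {..<n} S" and w: "w \<in> carrier_vec n"
  shows "order_matrix leq x n *\<^sub>v w = 0\<^sub>v n \<longleftrightarrow> (\<lambda>a. w $ inv_into {..<n} x a) \<in> order_kernel S leq"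
proof -
  let ?A = "order_matrix leq x n"
  let ?w = "\<lambda>a. w $ inv_into {..<n} x a"
  have row: "(\<Sum>j<n. ?A $$ (i, j) * w $ j) = (\<Sum>b\<in>S. order_entry leq (x i) b * ?w b)"
    if i: "i < n" for i
  proof -
    have "(\<Sum>j<n. ?A $$ (i, j) * w $ j) = (\<Sum>j<n. order_entry leq (x i) (x j) * ?w (x j))"
      using i bij by (intro sum.cong) (auto simp: order_matrix_def bij_betw_def inv_into_f_f)
    also have "\<dots> = (\<Sum>b\<in>S. order_entry leq (x i) b * ?w b)"
      by (rule sum.reindex_bij_betw[OF bij])
    finally show ?thesis .
  qed
  have "?A *\<^sub>v w = 0\<^sub>v n \<longleftrightarrow> (\<forall>i<n. (\<Sum>b\<in>S. order_entry leq (x i) b * ?w b) = 0)"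
    using row by (simp add: mult_mat_vec_eq_zero_iff[OF _ w] order_matrix_def)
  also have "\<dots> \<longleftrightarrow> (\<forall>z\<in>x ` {..<n}. (\<Sum>b\<in>S. order_entry leq z b * ?w b) = 0)"
    by auto
  finally show ?thesis
    using bij unfolding order_kernel_def bij_betw_def by simp
qed

lemma rank_order_matrix:
  assumes bij: "bij_betw x {..<n} S" and K: "one_dimensional_on S (order_kernel S leq)"
  shows "vec_space.rank n (order_matrix leq x n) = n - 1"
proof -
  let ?A = "order_matrix leq x n"
  let ?xi = "inv_into {..<n} x"
  obtain v0 b where v0: "v0 \<in> order_kernel S leq" and b: "b \<in> S" "v0 b \<noteq> 0"
    and line: "\<forall>v\<in>order_kernel S leq. \<exists>c. \<forall>a\<in>S. v a = c * v0 a"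
    using K unfolding one_dimensional_on_def by blast
  have x_xi: "?xi a < n" "x (?xi a) = a" if "a \<in> S" for a
    using bij that by (auto simp: bij_betw_def inv_into_into f_inv_into_f)
  have xi_x: "?xi (x j) = j" and x_in: "x j \<in> S" if "j < n" for j
    using bij that by (auto simp: bij_betw_def inv_into_f_f)
  define u0 where "u0 = vec n (\<lambda>j. v0 (x j))"
  have u0: "u0 \<in> carrier_vec n"
    unfolding u0_def by simp
  have "\<forall>a\<in>S. u0 $ ?xi a = v0 a"
    unfolding u0_def using x_xi by simp
  then have "(\<lambda>a. u0 $ ?xi a) \<in> order_kernel S leq"
    using order_kernel_cong[of S "\<lambda>a. u0 $ ?xi a" v0] v0 by simp
  then have Au0: "?A *\<^sub>v u0 = 0\<^sub>v n"
    using order_matrix_kernel_iff[OF bij u0] by simp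
  have u0_nonzero: "u0 \<noteq> 0\<^sub>v n"
  proof
    assume "u0 = 0\<^sub>v n"
    then have "u0 $ ?xi b = 0"
      using x_xi[OF b(1)] by simp
    then show False
      using b x_xi[OF b(1)] unfolding u0_def by simp
  qed
  have u0_line: "\<exists>c. w = c \<cdot>\<^sub>v u0" if w: "w \<in> carrier_vec n" "?A *\<^sub>v w = 0\<^sub>v n" for w
  proof -
    have "(\<lambda>a. w $ ?xi a) \<in> order_kernel S leq"
      using order_matrix_kernel_iff[OF bij w(1)] w(2) by simp
    then obtain c where c: "\<forall>a\<in>S. w $ ?xi a = c * v0 a"
      using bspec[OF line] by auto
    have "w = c \<cdot>\<^sub>v u0"
    proof (rule eq_vecI)
      fix j assume "j < dim_vec (c \<cdot>\<^sub>v u0)"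
      then have j: "j < n"
        unfolding u0_def by simp
      then show "w $ j = (c \<cdot>\<^sub>v u0) $ j"
        using c[rule_format, OF x_in[OF j]] xi_x[OF j] j unfolding u0_def by simp
    qed (use w(1) u0_def in simp)
    then show ?thesis ..
  qed
  show ?thesis
    by (rule vec_space.rank_eq_if_kernel_line[OF _ u0 u0_nonzero Au0 u0_line])
      (simp add: order_matrix_def)
qed

section \<open>Finite spaces as posets\<close>

lemma fin_space_le_iff_mem_minimal_open: "fin_space_le X a b \<longleftrightarrow> a \<in> minimal_open X b"
  unfolding fin_space_le_def minimal_open_def by blast

lemma fin_space_le_iff_openin: "fin_space_le X a b \<longleftrightarrow> (\<forall>U. openin X U \<and> b \<in> U \<longrightarrow> a \<in> U)"
  unfolding fin_space_le_iff_mem_minimal_open minimal_open_def by blast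

lemma openin_minimal_open:
  assumes "finite (topspace X)" and "a \<in> topspace X"
  shows "openin X (minimal_open X a)"
  unfolding minimal_open_def
proof (rule openin_Inter)
  have "{U. openin X U \<and> a \<in> U} \<subseteq> Pow (topspace X)"
    using openin_subset by blast
  then show "finite {U. openin X U \<and> a \<in> U}"
    using assms(1) finite_subset by blast
qed (use assms(2) in auto)

lemma poset_on_fin_space_le:
  assumes "t0_space X"
  shows "poset_on (topspace X) (fin_space_le X)"
  unfolding poset_on_def reflp_on_def antisymp_on_def transp_on_def
proof (intro conjI ballI impI)
  fix a b assume ab: "a \<in> topspace X" "b \<in> topspace X" "fin_space_le X a b" "fin_space_le X b a"
  show "a = b"
    using assms ab unfolding t0_space_def fin_space_le_iff_openin by blast
qed (auto simp: fin_space_le_def)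

lemma continuous_map_fin_space_le:
  assumes f: "continuous_map X Y f" and b: "b \<in> topspace X" and ab: "fin_space_le X a b"
  shows "fin_space_le Y (f a) (f b)"
  unfolding fin_space_le_iff_openin
proof (intro allI impI)
  fix V assume V: "openin Y V \<and> f b \<in> V"
  then have "openin X {x \<in> topspace X. f x \<in> V}"
    using openin_continuous_map_preimage[OF f] by blast
  moreover have "b \<in> {x \<in> topspace X. f x \<in> V}"
    using b V by blast
  ultimately have "a \<in> {x \<in> topspace X. f x \<in> V}"
    using ab unfolding fin_space_le_iff_openin by blast
  then show "f a \<in> V"
    by blast
qed

lemma continuous_map_order_endomap:
  assumes "continuous_map X X f"
  shows "order_endomap (topspace X) (fin_space_le X) f"
  unfolding order_endomap_def monotone_on_def
  using continuous_map_image_subset_topspace[OF assms] continuous_map_fin_space_le[OF assms] by blast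

lemma homotopy_locally_below:
  assumes finX: "finite (topspace X)" and finY: "finite (topspace Y)"
    and h: "continuous_map (prod_topology T X) Y h" and t0: "t0 \<in> topspace T"
  shows "\<exists>N. openin T N \<and> t0 \<in> N \<and>
    (\<forall>t\<in>N. \<forall>a\<in>topspace X. fin_space_le Y (h (t, a)) (h (t0, a)))"
proof -
  define N where "N = \<Inter>(insert (topspace T)
    ((\<lambda>a. {t \<in> topspace T. h (t, a) \<in> minimal_open Y (h (t0, a))}) ` topspace X))"
  have opens: "openin T {t \<in> topspace T. h (t, a) \<in> minimal_open Y (h (t0, a))}"
    if a: "a \<in> topspace X" for a
  proof (rule openin_continuous_map_preimage)
    have "continuous_map T (prod_topology T X) (\<lambda>t. (t, a))"
      using a by (intro continuous_map_pairedI) auto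
    then show "continuous_map T Y (\<lambda>t. h (t, a))"
      using continuous_map_compose[OF _ h] by (simp add: o_def)
    have "h (t0, a) \<in> topspace Y"
      using continuous_map_image_subset_topspace[OF h] t0 a by (auto simp: image_subset_iff)
    then show "openin Y (minimal_open Y (h (t0, a)))"
      by (rule openin_minimal_open[OF finY])
  qed
  have "openin T N"
    unfolding N_def
  proof (rule openin_Inter)
    show "finite (insert (topspace T)
        ((\<lambda>a. {t \<in> topspace T. h (t, a) \<in> minimal_open Y (h (t0, a))}) ` topspace X))"
      using finX by simp
  qed (use opens in auto)
  moreover have "t0 \<in> N"
    unfolding N_def using t0 fin_space_le_iff_mem_minimal_open[of Y] by (auto simp: fin_space_le_def)
  moreover have "\<forall>t\<in>N. \<forall>a\<in>topspace X. fin_space_le Y (h (t, a)) (h (t0, a))"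
    unfolding N_def fin_space_le_iff_mem_minimal_open by blast
  ultimately show ?thesis
    by (intro exI[of _ N]) blast
qed

lemma connected_space_rtrancl_locally:
  assumes conn: "connected_space T"
    and local: "\<And>t. t \<in> topspace T \<Longrightarrow>
      \<exists>N. openin T N \<and> t \<in> N \<and> (\<forall>s\<in>N. (f s, f t) \<in> R \<and> (f t, f s) \<in> R)"
    and a: "a \<in> topspace T" and b: "b \<in> topspace T"
  shows "(f a, f b) \<in> R\<^sup>*"
proof -
  define A where "A = {s \<in> topspace T. (f a, f s) \<in> R\<^sup>*}"
  have nbhd: "\<exists>N. openin T N \<and> t \<in> N \<and> N \<subseteq> topspace T \<and> (\<forall>s\<in>N. s \<in> A \<longleftrightarrow> t \<in> A)"
    if t: "t \<in> topspace T" for t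
  proof -
    obtain N where N: "openin T N" "t \<in> N" and R: "\<forall>s\<in>N. (f s, f t) \<in> R \<and> (f t, f s) \<in> R"
      using local[OF t] by blast
    have "s \<in> A \<longleftrightarrow> t \<in> A" if s: "s \<in> N" for s
    proof -
      have "s \<in> topspace T"
        using openin_subset[OF N(1)] s by blast
      then show ?thesis
        unfolding A_def using t R s rtrancl_into_rtrancl[of "f a" _ R] by blast
    qed
    then show ?thesis
      using N openin_subset[OF N(1)] by blast
  qed
  have "openin T A"
    unfolding openin_subopen[of T A]
  proof
    fix t assume "t \<in> A"
    then show "\<exists>N. openin T N \<and> t \<in> N \<and> N \<subseteq> A"
      using nbhd[of t] unfolding A_def by blast
  qed
  moreover have "openin T (topspace T - A)"
    unfolding openin_subopen[of T "topspace T - A"]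
  proof
    fix t assume "t \<in> topspace T - A"
    then show "\<exists>N. openin T N \<and> t \<in> N \<and> N \<subseteq> topspace T - A"
      using nbhd[of t] by blast
  qed
  ultimately have "A = {} \<or> A = topspace T"
    using conn unfolding connected_space_clopen_in closedin_def A_def by auto
  moreover have "a \<in> A"
    unfolding A_def using a by simp
  ultimately have "b \<in> A"
    using b by blast
  then show ?thesis
    unfolding A_def by blast
qed

lemma poset_contractible_if_contractible_space:
  assumes fin: "finite (topspace X)" and contr: "contractible_space X" and ne: "topspace X \<noteq> {}"
  shows "poset_contractible (topspace X) (fin_space_le X)"
proof -
  let ?I = "top_of_set {0..1::real}" and ?S = "topspace X"
  obtain c where "homotopic_with (\<lambda>_. True) X X id (\<lambda>_. c)"
    using contr unfolding contractible_space_def by blast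
  then obtain h where h: "continuous_map (prod_topology ?I X) X h"
    and h0: "\<forall>a. h (0, a) = id a" and h1: "\<forall>a. h (1, a) = c"
    unfolding homotopic_with_def by blast
  define F where "F t = (\<lambda>a. h (t, a))" for t
  have endo: "order_endomap ?S (fin_space_le X) (F t)" if "t \<in> {0..1}" for t
  proof (rule continuous_map_order_endomap)
    have "continuous_map X (prod_topology ?I X) (\<lambda>a. (t, a))"
      using that by (intro continuous_map_pairedI) auto
    then show "continuous_map X X (F t)"
      using continuous_map_compose[OF _ h] by (simp add: o_def F_def)
  qed
  have "(F 0, F 1) \<in> (comparable_endomaps ?S (fin_space_le X))\<^sup>*"
  proof (rule connected_space_rtrancl_locally[of ?I])
    show "connected_space ?I"
      by (simp add: connected_space_iff_is_interval_1)
    fix t assume t: "t \<in> topspace ?I"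
    obtain N where N: "openin ?I N" "t \<in> N"
      and below: "\<forall>s\<in>N. \<forall>a\<in>?S. fin_space_le X (F s a) (F t a)"
      using homotopy_locally_below[OF fin fin h t] unfolding F_def by blast
    have "(F s, F t) \<in> comparable_endomaps ?S (fin_space_le X)
        \<and> (F t, F s) \<in> comparable_endomaps ?S (fin_space_le X)" if s: "s \<in> N" for s
    proof -
      have "s \<in> {0..1}" "t \<in> {0..1}"
        using openin_subset[OF N(1)] s t by auto
      then show ?thesis
        using endo below s unfolding comparable_endomaps_def by simp
    qed
    then show "\<exists>N. openin ?I N \<and> t \<in> N \<and> (\<forall>s\<in>N. (F s, F t) \<in> comparable_endomaps ?S (fin_space_le X)
        \<and> (F t, F s) \<in> comparable_endomaps ?S (fin_space_le X))"
      using N by blast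
  qed auto
  moreover have "F 0 = id" "F 1 = (\<lambda>_. c)"
    using h0 h1 unfolding F_def by auto
  moreover obtain a where "a \<in> ?S"
    using ne by blast
  then have "c \<in> ?S"
    using continuous_map_image_subset_topspace[OF h] h1 by (force simp: image_subset_iff)
  ultimately show ?thesis
    unfolding poset_contractible_def by auto
qed

theorem mainTheorem11:
  fixes X :: "'a topology" and x :: "nat \<Rightarrow> 'a"
  assumes "finite (topspace X)"
    and "t0_space X"
    and "contractible_space X"
    and "card (topspace X) > 1"
    and "bij_betw x {0..<card (topspace X)} (topspace X)"
  shows "int (card (topspace X))
           - int (vec_space.rank (card (topspace X)) (space_matrix X x)) = 1"
proof -
  let ?S = "topspace X" and ?n = "card (topspace X)"
  have "?S \<noteq> {}"
    using assms(4) by auto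
  then have "one_dimensional_on ?S (order_kernel ?S (fin_space_le X))"
    using one_dimensional_order_kernel_if_contractible assms(1) poset_on_fin_space_le[OF assms(2)]
      poset_contractible_if_contractible_space[OF assms(1,3)] by blast
  then have "vec_space.rank ?n (order_matrix (fin_space_le X) x ?n) = ?n - 1"
    using rank_order_matrix assms(5) by (simp add: atLeast0LessThan)
  moreover have "space_matrix X x = order_matrix (fin_space_le X) x ?n"
    unfolding space_matrix_def order_matrix_def order_entry_def ..
  ultimately show ?thesis
    using assms(4) by simp
qed

end
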